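(* Let $m\ge1$, let $F$ be a population CDF, $t$ a point, and $\lambda_1,\dots,\lambda_m\ge0$ with $\sum_{r=1}^m\lambda_r=1$. With $\mathbb{B}_{(r)}(x)=\frac1r\sum_{i=1}^r\mathbb{B}(x,i,m+1-i)$ and $\beta_{(r)}(x)=\mathbb{B}_{(r)}'(x)$, define \[\sigma_{ml}^2(t)=\Big(\sum_{r=1}^m\lambda_r\frac{\beta_{(r)}^2(F(t))}{\mathbb{B}_{(r)}(F(t))(1-\mathbb{B}_{(r)}(F(t)))}\Big)^{-1},\qquad \sigma_{mb}^2(t)=\frac{\sum_{r=1}^m\lambda_r\mathbb{B}_{(r)}(F(t))(1-\mathbb{B}_{(r)}(F(t)))}{\big(\sum_{r=1}^m\lambda_r\beta_{(r)}(F(t))\big)^2},\] the asymptotic variances (under perfect ranking) of $\sqrt n$ times the errors of the maximum likelihood and moment-based CDF estimators from a MinPNS sample whose stratum proportions converge to $\lambda_r$. Then $\sigma_{ml}^2(t)\le\sigma_{mb}^2(t)$, and equality holds if and only if either $m=1$ or there exists $r\in\{1,\dots,m\}$ with $\lambda_r=1$.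
   Context: $\mathbb{B}(x,i,m+1-i)=\int_0^x i\binom{m}{i}u^{i-1}(1-u)^{m-i}\,du$ is the Beta$(i,m+1-i)$ CDF at $x$, so $\beta_{(r)}(x)=\frac1r\sum_{i=1}^r\beta(x,i,m+1-i)$ with $\beta(\cdot,i,m+1-i)$ the Beta density. In a MinPNS (minimum partial nomination sampling) sample under perfect ranking, a measured unit in stratum $r$ is a uniformly random one of the $r$ smallest of $m$ i.i.d. draws from $F$, hence has CDF $\mathbb{B}_{(r)}(F(t))$. *)

theory Defs
  imports "HOL-Probability.Probability"
begin

text \<open>Beta(i, m+1-i) density at u (normalising constant 1/B(i,m+1-i) = i * (m choose i)).\<close>
definition beta_dens :: "nat \<Rightarrow> nat \<Rightarrow> real \<Rightarrow> real" where
  "beta_dens m i u = real i * real (m choose i) * u ^ (i - 1) * (1 - u) ^ (m - i)"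

definition beta_cdf :: "nat \<Rightarrow> nat \<Rightarrow> real \<Rightarrow> real" where
  "beta_cdf m i x = integral {0..x} (beta_dens m i)"

definition Bstrat :: "nat \<Rightarrow> nat \<Rightarrow> real \<Rightarrow> real" where
  "Bstrat m r x = (1 / real r) * (\<Sum>i=1..r. beta_cdf m i x)"

definition bstrat :: "nat \<Rightarrow> nat \<Rightarrow> real \<Rightarrow> real" where
  "bstrat m r x = (1 / real r) * (\<Sum>i=1..r. beta_dens m i x)"

definition sigma_ml2 :: "nat \<Rightarrow> (nat \<Rightarrow> real) \<Rightarrow> real \<Rightarrow> real" where
  "sigma_ml2 m lam x = inverse (\<Sum>r=1..m. lam r * (bstrat m r x)\<^sup>2
        / (Bstrat m r x * (1 - Bstrat m r x)))"

definition sigma_mb2 :: "nat \<Rightarrow> (nat \<Rightarrow> real) \<Rightarrow> real \<Rightarrow> real" where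
  "sigma_mb2 m lam x = (\<Sum>r=1..m. lam r * Bstrat m r x * (1 - Bstrat m r x))
        / (\<Sum>r=1..m. lam r * bstrat m r x)\<^sup>2"

end

theory Submission
  imports Defs
begin

text \<open>Write \<open>y = F(t)\<close>, \<open>X \<sim> Bin(m, y)\<close>, \<open>B\<^sub>r = \<bbbB>\<^sub>(\<^sub>r\<^sub>)(y)\<close>, \<open>\<beta>\<^sub>r = \<beta>\<^sub>(\<^sub>r\<^sub>)(y)\<close>
  and \<open>A\<^sub>r = B\<^sub>r (1 - B\<^sub>r)\<close>. The probabilities of \<open>X\<close> are the Bernstein polynomials, and by the
  fundamental theorem of calculus the Beta CDF is a binomial tail, \<open>\<bbbB>(y, i, m + 1 - i) = P(X \<ge> i)\<close>;
  hence \<open>r B\<^sub>r = r - E[(r - X)\<^sup>+]\<close> and \<open>r y \<beta>\<^sub>r = E[X; X \<le> r]\<close>. The inequality is the weighted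
  Cauchy-Schwarz inequality \<open>(\<Sum> \<lambda>\<^sub>r \<beta>\<^sub>r)\<^sup>2 \<le> (\<Sum> \<lambda>\<^sub>r \<beta>\<^sub>r\<^sup>2 / A\<^sub>r) (\<Sum> \<lambda>\<^sub>r A\<^sub>r)\<close>, with equality iff
  \<open>\<beta>\<^sub>r / A\<^sub>r\<close> is constant on the support of \<open>\<lambda>\<close>. The substance of the proof is that this ratio is
  strictly decreasing in \<open>r\<close>: clearing denominators reduces it to an inequality between truncated
  binomial moments, which follows from log-concavity of the binomial coefficients.\<close>

section \<open>Log-concavity of binomial coefficients and Bernstein polynomials\<close>

lemma Suc_times_binomial_eq_diff_times:
  "real (Suc k) * real (n choose Suc k) = real (n - k) * real (n choose k)"
  by (metis binomial_absorb_comp binomial_absorption of_nat_mult)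

lemma binomial_log_concave_step:
  assumes "c + 2 \<le> d"
  shows "real (n choose c) * real (n choose d) \<le> real (n choose Suc c) * real (n choose (d - 1))"
proof -
  obtain e where d: "d = Suc e" using assms by (cases d) auto
  have ratio: "real (Suc c) * real (n - e) \<le> real (n - c) * real d"
  proof (cases "e \<le> n")
    case True
    have "(real c + 1) * (real n + 1) \<le> real d * (real n + 1)"
      using assms by (intro mult_right_mono) auto
    then show ?thesis using True assms d by (simp add: of_nat_diff algebra_simps)
  qed simp
  have "real (Suc c) * real d * (real (n choose c) * real (n choose d))
      = real (n choose c) * real (Suc c) * (real d * real (n choose d))"
    by (simp only: mult_ac)
  also have "\<dots> = real (n choose c) * real (n choose e) * (real (Suc c) * real (n - e))"
    using Suc_times_binomial_eq_diff_times[of e n] by (simp add: d mult_ac)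
  also have "\<dots> \<le> real (n choose c) * real (n choose e) * (real (n - c) * real d)"
    by (intro mult_left_mono ratio) auto
  also have "\<dots> = real d * real (n choose e) * (real (Suc c) * real (n choose Suc c))"
    using Suc_times_binomial_eq_diff_times[of c n] by (simp add: mult_ac)
  also have "\<dots> = real (Suc c) * real d * (real (n choose Suc c) * real (n choose (d - 1)))"
    by (simp add: d mult_ac)
  finally show ?thesis by (rule mult_left_le_imp_le) (simp add: d)
qed

lemma binomial_log_concave:
  assumes "a + b = c + d" "c \<le> a" "a \<le> d"
  shows "real (n choose c) * real (n choose d) \<le> real (n choose a) * real (n choose b)"
proof -
  have inner: "real (n choose c) * real (n choose d) \<le> real (n choose a) * real (n choose b)"
    if "a + b = c + d" "c \<le> a" "a \<le> b" for a b c d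
    using that
  proof (induction "a - c" arbitrary: c d)
    case 0
    then show ?case by simp
  next
    case (Suc k)
    then have "real (n choose c) * real (n choose d) \<le> real (n choose Suc c) * real (n choose (d - 1))"
      by (intro binomial_log_concave_step) linarith
    also have "\<dots> \<le> real (n choose a) * real (n choose b)"
      using Suc by (intro Suc.hyps(1)) auto
    finally show ?case .
  qed
  show ?thesis
  proof (cases "a \<le> b")
    case True
    then show ?thesis using inner assms by blast
  next
    case False
    then have "real (n choose c) * real (n choose d) \<le> real (n choose b) * real (n choose a)"
      using inner[of b a c d] assms by simp
    then show ?thesis by (simp add: mult.commute)
  qed
qed

lemma Bernstein_log_concave:
  assumes "a + b = c + d" "c \<le> a" "a \<le> d" "0 \<le> y" "y \<le> 1"
  shows "Bernstein n c y * Bernstein n d y \<le> Bernstein n a y * Bernstein n b y"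
proof (cases "d \<le> n")
  case True
  define w where "w = y ^ (c + d) * (1 - y) ^ ((n - c) + (n - d))"
  have "(n - a) + (n - b) = (n - c) + (n - d)" using assms True by linarith
  then have "y ^ a * y ^ b = y ^ (c + d)" "(1 - y) ^ (n - a) * (1 - y) ^ (n - b) = (1 - y) ^ ((n - c) + (n - d))"
    by (simp_all only: power_add[symmetric] assms(1))
  then have "Bernstein n a y * Bernstein n b y = real (n choose a) * real (n choose b) * w"
    unfolding Bernstein_def w_def by (simp add: mult_ac)
  moreover have "Bernstein n c y * Bernstein n d y = real (n choose c) * real (n choose d) * w"
    unfolding Bernstein_def w_def by (simp add: power_add mult_ac)
  moreover have "0 \<le> w" unfolding w_def using assms by simp
  ultimately show ?thesis
    using binomial_log_concave[OF assms(1-3)] by (simp add: mult_right_mono)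
next
  case False
  then have "Bernstein n d y = 0" by (simp add: Bernstein_def)
  then show ?thesis using assms by (simp add: Bernstein_nonneg)
qed

lemma of_nat_times_Bernstein:
  assumes "1 \<le> k"
  shows "real k * Bernstein m k y = real m * y * Bernstein (m - 1) (k - 1) y"
proof -
  have "real k * real (m choose k) = real m * real ((m - 1) choose (k - 1))"
    using times_binomial_minus1_eq[of k m] assms by (metis of_nat_mult not_one_le_zero neq0_conv)
  moreover have "y ^ k = y * y ^ (k - 1)" "m - k = (m - 1) - (k - 1)"
    using assms by (simp_all add: power_eq_if)
  ultimately show ?thesis unfolding Bernstein_def by (simp add: mult_ac)
qed

lemma of_nat_diff_times_Bernstein:
  "real (m - k) * Bernstein m k y = real m * (1 - y) * Bernstein (m - 1) k y"
proof (cases "k < m")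
  case True
  have "real (m - k) * real (m choose k) = real m * real ((m - 1) choose k)"
    by (metis binomial_absorb_comp of_nat_mult)
  moreover have "(1 - y) ^ (m - k) = (1 - y) * (1 - y) ^ (m - 1 - k)"
    using True by (simp add: power_eq_if)
  ultimately show ?thesis unfolding Bernstein_def by (simp add: mult_ac)
next
  case False
  then show ?thesis by (cases m) (auto simp: Bernstein_def)
qed

lemma Bernstein_Suc_shift:
  "real (Suc k) * Bernstein m (Suc k) y * (1 - y) = real (m - k) * y * Bernstein m k y"
  using of_nat_times_Bernstein[of "Suc k" m y] of_nat_diff_times_Bernstein[of m k y]
  by (simp add: mult_ac)

lemma Bernstein_exchange_le:
  assumes "k < i" "i \<le> r" "0 \<le> y" "y \<le> 1"
  defines "j \<equiv> k + r - i"
  shows "real r * real (m - k) * (Bernstein m r y * Bernstein m k y)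
       \<le> real i * real (m - j) * (Bernstein m i y * Bernstein m j y)"
proof -
  define c where "c = real m * real m * y * (1 - y)"
  have "real r * real (m - k) * (Bernstein m r y * Bernstein m k y)
      = (real r * Bernstein m r y) * (real (m - k) * Bernstein m k y)"
    by (simp only: mult_ac)
  also have "\<dots> = c * (Bernstein (m - 1) k y * Bernstein (m - 1) (r - 1) y)"
    using assms by (simp only: of_nat_times_Bernstein of_nat_diff_times_Bernstein c_def mult_ac)
  also have "\<dots> \<le> c * (Bernstein (m - 1) (i - 1) y * Bernstein (m - 1) j y)"
    using assms by (intro mult_left_mono Bernstein_log_concave) (auto simp: c_def j_def)
  also have "\<dots> = (real i * Bernstein m i y) * (real (m - j) * Bernstein m j y)"
    using assms by (simp only: of_nat_times_Bernstein of_nat_diff_times_Bernstein c_def mult_ac)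
  also have "\<dots> = real i * real (m - j) * (Bernstein m i y * Bernstein m j y)"
    by (simp only: mult_ac)
  finally show ?thesis .
qed

section \<open>Beta distribution functions as binomial tails\<close>

lemma beta_dens_0 [simp]: "beta_dens m 0 u = 0"
  by (simp add: beta_dens_def)

lemma has_real_derivative_Bernstein:
  "((\<lambda>u. Bernstein m k u) has_real_derivative beta_dens m k u - beta_dens m (Suc k) u) (at u)"
proof -
  have "((\<lambda>u. Bernstein m k u) has_real_derivative
      real (m choose k) * (real k * u ^ (k - 1) * (1 - u) ^ (m - k)
        - real (m - k) * u ^ k * (1 - u) ^ (m - k - 1))) (at u)"
    unfolding Bernstein_def
    by (rule derivative_eq_intros refl)+ (simp add: algebra_simps)
  also have "real (m choose k) * (real k * u ^ (k - 1) * (1 - u) ^ (m - k)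
        - real (m - k) * u ^ k * (1 - u) ^ (m - k - 1)) = beta_dens m k u - beta_dens m (Suc k) u"
    unfolding beta_dens_def Suc_times_binomial_eq_diff_times by (simp add: algebra_simps)
  finally show ?thesis .
qed

lemma has_real_derivative_minus_sum_Bernstein:
  "((\<lambda>u. - (\<Sum>k<i. Bernstein m k u)) has_real_derivative beta_dens m i u) (at u)"
proof -
  have "((\<lambda>u. - (\<Sum>k<i. Bernstein m k u)) has_real_derivative
      - (\<Sum>k<i. beta_dens m k u - beta_dens m (Suc k) u)) (at u)"
    by (intro DERIV_minus DERIV_sum has_real_derivative_Bernstein)
  then show ?thesis using sum_lessThan_telescope'[of "\<lambda>k. beta_dens m k u" i] by simp
qed

lemma beta_cdf_eq_sum_Bernstein:
  assumes "1 \<le> i" "0 \<le> y"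
  shows "beta_cdf m i y = 1 - (\<Sum>k<i. Bernstein m k y)"
proof -
  have "(beta_dens m i has_integral
      (- (\<Sum>k<i. Bernstein m k y)) - (- (\<Sum>k<i. Bernstein m k 0))) {0..y}"
    using assms(2)
    by (intro fundamental_theorem_of_calculus)
       (auto simp: has_real_derivative_iff_has_vector_derivative[symmetric]
         intro: has_field_derivative_at_within has_real_derivative_minus_sum_Bernstein)
  moreover have "(\<Sum>k<i. Bernstein m k 0) = 1"
    using assms(1) by (simp add: Bernstein_def lessThan_Suc_atMost[symmetric] sum.lessThan_Suc_shift)
  ultimately show ?thesis
    unfolding beta_cdf_def by (simp add: integral_unique)
qed

section \<open>Truncated moments of the binomial distribution\<close>

lemma sum_atMost_sum_lessThan:
  fixes f :: "nat \<Rightarrow> real"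
  shows "(\<Sum>i\<le>r. \<Sum>k<i. f k) = (\<Sum>k<r. real (r - k) * f k)"
  by (induction r) (simp_all add: sum.distrib[symmetric] Suc_diff_le algebra_simps)

text \<open>For \<open>X \<sim> Bin(m, y)\<close>: \<open>partial_mean m y r = E[X; X \<le> r]\<close> and
  \<open>shortfall m y r = E[(r - X)\<^sup>+]\<close>.\<close>

definition partial_mean :: "nat \<Rightarrow> real \<Rightarrow> nat \<Rightarrow> real" where
  "partial_mean m y r = (\<Sum>i\<le>r. real i * Bernstein m i y)"

definition shortfall :: "nat \<Rightarrow> real \<Rightarrow> nat \<Rightarrow> real" where
  "shortfall m y r = (\<Sum>k<r. real (r - k) * Bernstein m k y)"

lemma partial_mean_mult_one_minus:
  "partial_mean m y r * (1 - y) = y * (\<Sum>j<r. real (m - j) * Bernstein m j y)"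
proof -
  have "partial_mean m y r * (1 - y) = (\<Sum>j<r. real (Suc j) * Bernstein m (Suc j) y * (1 - y))"
    unfolding partial_mean_def sum_distrib_right lessThan_Suc_atMost[symmetric]
    by (simp only: sum.lessThan_Suc_shift)
  also have "\<dots> = y * (\<Sum>j<r. real (m - j) * Bernstein m j y)"
    unfolding Bernstein_Suc_shift sum_distrib_left by (simp add: mult_ac)
  finally show ?thesis .
qed

lemma shortfall_terms_sum_le:
  assumes "0 \<le> y" "y \<le> 1"
  shows "(\<Sum>k<r. real (r - k) * (real r * real (m - k) * (Bernstein m r y * Bernstein m k y)))
       \<le> partial_mean m y r * (\<Sum>j<r. real (m - j) * Bernstein m j y)"
proof -
  define B where "B = (\<lambda>k. Bernstein m k y)"
  define g where "g = (\<lambda>k. real r * real (m - k) * (B r * B k))"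
  have inner: "(\<Sum>k<i. g k) \<le> real i * B i * (\<Sum>j<r. real (m - j) * B j)" if "i \<le> r" for i
  proof -
    have "(\<Sum>k<i. g k) \<le> (\<Sum>k<i. real i * real (m - (k + r - i)) * (B i * B (k + r - i)))"
      unfolding g_def B_def using that assms by (intro sum_mono Bernstein_exchange_le) auto
    also have "\<dots> = (\<Sum>j\<in>(\<lambda>k. k + r - i) ` {..<i}. real i * real (m - j) * (B i * B j))"
      using that by (subst sum.reindex) (auto simp: inj_on_def)
    also have "\<dots> \<le> (\<Sum>j<r. real i * real (m - j) * (B i * B j))"
      using that assms by (intro sum_mono2) (auto simp: B_def Bernstein_nonneg)
    also have "\<dots> = real i * B i * (\<Sum>j<r. real (m - j) * B j)"
      by (simp add: sum_distrib_left mult_ac)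
    finally show ?thesis .
  qed
  have "(\<Sum>k<r. real (r - k) * g k) = (\<Sum>i\<le>r. \<Sum>k<i. g k)"
    by (rule sum_atMost_sum_lessThan[symmetric])
  also have "\<dots> \<le> (\<Sum>i\<le>r. real i * B i * (\<Sum>j<r. real (m - j) * B j))"
    by (intro sum_mono inner) simp
  also have "\<dots> = partial_mean m y r * (\<Sum>j<r. real (m - j) * B j)"
    by (simp add: partial_mean_def B_def sum_distrib_right)
  finally show ?thesis unfolding g_def B_def .
qed

lemma Bernstein_shortfall_less_partial_mean_mult:
  assumes "0 < y" "y < 1" "1 \<le> r" "r < m"
  shows "real r * real (m - r) * Bernstein m r y * shortfall m y r
       < partial_mean m y r * (\<Sum>j<r. real (m - j) * Bernstein m j y)"
proof -
  define B where "B = (\<lambda>k. Bernstein m k y)"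
  have "real r * real (m - r) * B r * shortfall m y r
      = (\<Sum>k<r. real (r - k) * (real r * real (m - r) * (B r * B k)))"
    by (simp add: shortfall_def B_def sum_distrib_left mult_ac)
  also have "\<dots> < (\<Sum>k<r. real (r - k) * (real r * real (m - k) * (B r * B k)))"
  proof (rule sum_strict_mono_ex1)
    show "\<forall>k\<in>{..<r}. real (r - k) * (real r * real (m - r) * (B r * B k))
        \<le> real (r - k) * (real r * real (m - k) * (B r * B k))"
      using assms by (auto simp: B_def Bernstein_nonneg intro!: mult_left_mono mult_right_mono)
    have "0 < B r * B 0" using assms by (simp add: B_def Bernstein_pos)
    then show "\<exists>k\<in>{..<r}. real (r - k) * (real r * real (m - r) * (B r * B k))
        < real (r - k) * (real r * real (m - k) * (B r * B k))"
      using assms by (intro bexI[of _ 0]) (auto intro!: mult_strict_right_mono)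
  qed simp
  also have "\<dots> \<le> partial_mean m y r * (\<Sum>j<r. real (m - j) * B j)"
    unfolding B_def using assms by (intro shortfall_terms_sum_le) auto
  finally show ?thesis unfolding B_def .
qed

lemma Bernstein_Suc_shortfall_less_partial_mean_sq:
  assumes "0 < y" "y < 1" "1 \<le> r" "r < m"
  shows "real r * real (Suc r) * Bernstein m (Suc r) y * shortfall m y r < (partial_mean m y r)\<^sup>2"
proof -
  have "real r * real (Suc r) * Bernstein m (Suc r) y * shortfall m y r * (1 - y)
      = y * (real r * real (m - r) * Bernstein m r y * shortfall m y r)"
    using Bernstein_Suc_shift[of r m y] by (simp add: mult_ac)
  also have "\<dots> < y * (partial_mean m y r * (\<Sum>j<r. real (m - j) * Bernstein m j y))"
    using Bernstein_shortfall_less_partial_mean_mult[OF assms] assms by simp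
  also have "\<dots> = (partial_mean m y r)\<^sup>2 * (1 - y)"
    using partial_mean_mult_one_minus[of m y r] by (simp add: power2_eq_square mult_ac)
  finally show ?thesis using assms by simp
qed

lemma sum_atMost_Bernstein_le_1:
  assumes "0 \<le> y" "y \<le> 1" "r \<le> m"
  shows "(\<Sum>k\<le>r. Bernstein m k y) \<le> 1"
proof -
  have "(\<Sum>k\<le>r. Bernstein m k y) \<le> (\<Sum>k\<le>m. Bernstein m k y)"
    using assms by (intro sum_mono2) (auto simp: Bernstein_nonneg)
  then show ?thesis by simp
qed

lemma shortfall_add_partial_mean:
  "shortfall m y r + partial_mean m y r = real r * (\<Sum>k\<le>r. Bernstein m k y)"
  unfolding shortfall_def partial_mean_def sum_distrib_left lessThan_Suc_atMost[symmetric]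
  by (simp add: sum.distrib[symmetric] of_nat_diff algebra_simps)

lemma shortfall_Suc:
  "shortfall m y (Suc r) = shortfall m y r + (\<Sum>k\<le>r. Bernstein m k y)"
  unfolding shortfall_def lessThan_Suc_atMost[symmetric]
  by (simp add: sum.distrib[symmetric] Suc_diff_le algebra_simps)

lemma partial_mean_Suc:
  "partial_mean m y (Suc r) = partial_mean m y r + real (Suc r) * Bernstein m (Suc r) y"
  by (simp add: partial_mean_def)

lemma partial_mean_pos:
  assumes "0 < y" "y < 1" "1 \<le> r" "1 \<le> m"
  shows "0 < partial_mean m y r"
proof -
  have "real 1 * Bernstein m 1 y \<le> partial_mean m y r"
    unfolding partial_mean_def using assms
    by (intro member_le_sum) (auto simp: Bernstein_nonneg)
  moreover have "0 < Bernstein m 1 y" using assms by (simp add: Bernstein_pos)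
  ultimately show ?thesis by simp
qed

lemma shortfall_pos:
  assumes "0 < y" "y < 1" "1 \<le> r"
  shows "0 < shortfall m y r"
proof -
  have "real (r - 0) * Bernstein m 0 y \<le> shortfall m y r"
    unfolding shortfall_def using assms
    by (intro member_le_sum) (auto simp: Bernstein_nonneg)
  moreover have "0 < real (r - 0) * Bernstein m 0 y" using assms by (simp add: Bernstein_pos)
  ultimately show ?thesis by simp
qed

lemma shortfall_less:
  assumes "0 < y" "y < 1" "1 \<le> r" "r \<le> m"
  shows "shortfall m y r < real r"
proof -
  have "shortfall m y r < shortfall m y r + partial_mean m y r"
    using partial_mean_pos assms by simp
  also have "\<dots> \<le> real r"
    unfolding shortfall_add_partial_mean using sum_atMost_Bernstein_le_1[of y r m] assms
    by (simp add: mult_left_le)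
  finally show ?thesis .
qed

lemma Bstrat_eq:
  assumes "1 \<le> r" "0 \<le> y"
  shows "Bstrat m r y = 1 - shortfall m y r / real r"
proof -
  have "(\<Sum>i=1..r. beta_cdf m i y) = (\<Sum>i=1..r. 1 - (\<Sum>k<i. Bernstein m k y))"
    using assms by (intro sum.cong) (auto simp: beta_cdf_eq_sum_Bernstein)
  also have "\<dots> = real r - (\<Sum>i\<le>r. \<Sum>k<i. Bernstein m k y)"
    by (simp add: sum_subtractf atLeast1_atMost_eq_remove0 sum.remove[of "{..r}" 0])
  finally show ?thesis
    using assms by (simp add: Bstrat_def shortfall_def sum_atMost_sum_lessThan field_simps)
qed

lemma bstrat_eq:
  assumes "y \<noteq> 0"
  shows "bstrat m r y = partial_mean m y r / (real r * y)"
proof -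
  have "y * (\<Sum>i=1..r. beta_dens m i y) = (\<Sum>i=1..r. real i * Bernstein m i y)"
    unfolding sum_distrib_left
    by (intro sum.cong) (auto simp: beta_dens_def Bernstein_def power_eq_if)
  also have "\<dots> = partial_mean m y r"
    unfolding partial_mean_def by (intro sum.mono_neutral_left) auto
  finally have "(\<Sum>i=1..r. beta_dens m i y) = partial_mean m y r / y"
    using assms by (simp add: field_simps)
  then show ?thesis by (simp add: bstrat_def)
qed

section \<open>Monotonicity of the stratum ratio\<close>

text \<open>With \<open>a\<close>, \<open>T\<close>, \<open>v\<close>, \<open>p\<close> the values of \<open>partial_mean\<close>, \<open>shortfall\<close>, \<open>P(X \<le> r)\<close>
  and \<open>P(X = r + 1)\<close> at \<open>r\<close>, the conclusion is \<open>strat_ratio\<close> decreasing from \<open>r\<close> to \<open>r + 1\<close>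
  with denominators cleared.\<close>

lemma ratio_step_algebra:
  fixes r a T v p :: real
  assumes "1 \<le> r" "0 < a" "0 < T" "0 \<le> p" "p + v \<le> 1" "a + T = r * v"
    and key: "r * (r + 1) * p * T < a\<^sup>2"
  shows "(r + 1) * (a + (r + 1) * p) * ((r - T) * T) < r * a * ((r + 1 - (T + v)) * (T + v))"
proof -
  define q where "q = (r + 1) * p"
  define E where "E = a * v - q * T"
  have T: "T = r * v - a" using assms(6) by simp
  have key': "r * q * T < a\<^sup>2" using key by (simp add: q_def mult_ac)
  have "r * E = (a\<^sup>2 - r * q * T) + a * T"
    unfolding E_def T by (simp add: power2_eq_square algebra_simps)
  then have "0 < r * E" using key' mult_pos_pos[OF assms(2,3)] by linarith
  then have E: "0 < E" using assms(1) by (simp add: zero_less_mult_iff)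
  have "r * q * E \<le> r * (r + 1) * (1 - v) * E"
    using assms E by (intro mult_right_mono) (auto simp: q_def)
  moreover have "a ^ 3 - (r + 1) * q * a * T + r * q * E = (a + q) * (a\<^sup>2 - r * q * T)"
    unfolding E_def T by (simp add: power2_eq_square power3_eq_cube algebra_simps)
  moreover have "0 < (a + q) * (a\<^sup>2 - r * q * T)"
    using key' assms by (intro mult_pos_pos add_pos_nonneg) (auto simp: q_def)
  moreover have "r * a * ((r + 1 - (T + v)) * (T + v)) - (r + 1) * (a + q) * ((r - T) * T)
      = a ^ 3 - (r + 1) * q * a * T + r * (r + 1) * (1 - v) * E"
    unfolding E_def T by (simp add: power3_eq_cube algebra_simps)
  ultimately show ?thesis unfolding q_def by linarith
qed

definition strat_ratio :: "nat \<Rightarrow> nat \<Rightarrow> real \<Rightarrow> real" where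
  "strat_ratio m r y = bstrat m r y / (Bstrat m r y * (1 - Bstrat m r y))"

lemma strat_ratio_eq:
  assumes "0 < y" "y < 1" "1 \<le> r" "r \<le> m"
  shows "strat_ratio m r y
    = real r * partial_mean m y r / (y * ((real r - shortfall m y r) * shortfall m y r))"
proof -
  have "0 < shortfall m y r" "shortfall m y r < real r"
    using shortfall_pos shortfall_less assms by auto
  then show ?thesis
    using assms by (simp add: strat_ratio_def bstrat_eq Bstrat_eq field_simps power2_eq_square)
qed

lemma strat_ratio_Suc_less:
  assumes "0 < y" "y < 1" "1 \<le> r" "r < m"
  shows "strat_ratio m (Suc r) y < strat_ratio m r y"
proof -
  define a where "a = partial_mean m y r"
  define T where "T = shortfall m y r"
  define v where "v = (\<Sum>k\<le>r. Bernstein m k y)"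
  define p where "p = Bernstein m (Suc r) y"
  have "p + v = (\<Sum>k\<le>Suc r. Bernstein m k y)" by (simp add: p_def v_def)
  also have "\<dots> \<le> 1" using assms by (intro sum_atMost_Bernstein_le_1) auto
  finally have pv: "p + v \<le> 1" .
  have step: "(real r + 1) * (a + (real r + 1) * p) * ((real r - T) * T)
      < real r * a * ((real r + 1 - (T + v)) * (T + v))"
  proof (rule ratio_step_algebra)
    show "real r * (real r + 1) * p * T < a\<^sup>2"
      using Bernstein_Suc_shortfall_less_partial_mean_sq[OF assms]
      by (simp add: a_def T_def p_def add.commute)
    show "a + T = real r * v"
      using shortfall_add_partial_mean[of m y r] by (simp add: a_def T_def v_def)
  qed (use assms pv partial_mean_pos shortfall_pos in \<open>auto simp: a_def T_def p_def Bernstein_nonneg\<close>)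
  have "0 < T" "T < real r" "0 < T + v" "T + v < real r + 1"
    using shortfall_pos[of y "Suc r" m] shortfall_less[of y "Suc r" m] assms
      shortfall_pos[of y r m] shortfall_less[of y r m]
    by (auto simp: T_def v_def shortfall_Suc)
  then have D0: "0 < y * ((real r - T) * T)" and D1: "0 < y * ((real r + 1 - (T + v)) * (T + v))"
    using assms by simp_all
  have R0: "strat_ratio m r y = real r * a / (y * ((real r - T) * T))"
    using strat_ratio_eq[of y r m] assms by (simp add: a_def T_def)
  have R1: "strat_ratio m (Suc r) y
      = (real r + 1) * (a + (real r + 1) * p) / (y * ((real r + 1 - (T + v)) * (T + v)))"
    using strat_ratio_eq[of y "Suc r" m] assms
    by (simp add: a_def T_def v_def p_def partial_mean_Suc shortfall_Suc add.commute)
  have "(real r + 1) * (a + (real r + 1) * p) * (y * ((real r - T) * T))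
      < real r * a * (y * ((real r + 1 - (T + v)) * (T + v)))"
    using mult_strict_left_mono[OF step \<open>0 < y\<close>] by (simp only: mult_ac)
  moreover have "x1 / d1 < x0 / d0" if "x1 * d0 < x0 * d1" "0 < d0" "0 < d1" for x0 x1 d0 d1 :: real
    using that by (simp add: field_simps)
  ultimately show ?thesis unfolding R0 R1 using D0 D1 by blast
qed

lemma strat_ratio_strict_antimono:
  assumes "0 < y" "y < 1" "1 \<le> r" "r < s" "s \<le> m"
  shows "strat_ratio m s y < strat_ratio m r y"
proof -
  have "Suc r \<le> s" using assms by simp
  then show ?thesis using \<open>s \<le> m\<close>
  proof (induction s rule: dec_induct)
    case base
    then show ?case using strat_ratio_Suc_less assms by simp
  next
    case (step n)
    then have "strat_ratio m (Suc n) y < strat_ratio m n y"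
      using assms by (intro strat_ratio_Suc_less) auto
    with step show ?case by simp
  qed
qed

lemma inj_on_strat_ratio:
  assumes "0 < y" "y < 1"
  shows "inj_on (\<lambda>r. strat_ratio m r y) {1..m}"
  by (intro linorder_inj_onI') (use strat_ratio_strict_antimono assms in force)

lemma bstrat_pos:
  assumes "0 < y" "y < 1" "1 \<le> r" "r \<le> m"
  shows "0 < bstrat m r y"
  using partial_mean_pos[of y r m] assms by (simp add: bstrat_eq)

lemma Bstrat_strict_bounds:
  assumes "0 < y" "y < 1" "1 \<le> r" "r \<le> m"
  shows "0 < Bstrat m r y" "Bstrat m r y < 1"
  using shortfall_pos[of y r m] shortfall_less[of y r m] assms by (simp_all add: Bstrat_eq)

section \<open>Weighted Cauchy-Schwarz inequality\<close>

lemma sum_weighted_lagrange_identity: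
  fixes l A b :: "'a \<Rightarrow> real"
  assumes "\<And>i. i \<in> I \<Longrightarrow> A i \<noteq> 0"
  shows "(\<Sum>i\<in>I. \<Sum>j\<in>I. l i * l j * A i * A j * (b i / A i - b j / A j)\<^sup>2)
       = 2 * ((\<Sum>i\<in>I. l i * (b i)\<^sup>2 / A i) * (\<Sum>i\<in>I. l i * A i) - (\<Sum>i\<in>I. l i * b i)\<^sup>2)"
proof -
  have "l i * l j * A i * A j * (b i / A i - b j / A j)\<^sup>2
      = (l i * (b i)\<^sup>2 / A i) * (l j * A j) + (l i * A i) * (l j * (b j)\<^sup>2 / A j)
        - 2 * ((l i * b i) * (l j * b j))" if "i \<in> I" "j \<in> I" for i j
    using assms that by (simp add: field_simps power2_eq_square)
  then have "(\<Sum>i\<in>I. \<Sum>j\<in>I. l i * l j * A i * A j * (b i / A i - b j / A j)\<^sup>2)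
      = (\<Sum>i\<in>I. \<Sum>j\<in>I. (l i * (b i)\<^sup>2 / A i) * (l j * A j) + (l i * A i) * (l j * (b j)\<^sup>2 / A j)
          - 2 * ((l i * b i) * (l j * b j)))"
    by (intro sum.cong) auto
  also have "\<dots> = (\<Sum>i\<in>I. l i * (b i)\<^sup>2 / A i) * (\<Sum>j\<in>I. l j * A j)
      + (\<Sum>i\<in>I. l i * A i) * (\<Sum>j\<in>I. l j * (b j)\<^sup>2 / A j)
      - 2 * ((\<Sum>i\<in>I. l i * b i) * (\<Sum>j\<in>I. l j * b j))"
    by (simp only: sum.distrib sum_subtractf sum_distrib_left[symmetric] sum_product)
  finally show ?thesis by (simp add: power2_eq_square algebra_simps)
qed

lemma weighted_cauchy_schwarz:
  fixes l A b :: "'a \<Rightarrow> real"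
  assumes "finite I" "\<And>i. i \<in> I \<Longrightarrow> 0 \<le> l i" "\<And>i. i \<in> I \<Longrightarrow> 0 < A i"
  shows "(\<Sum>i\<in>I. l i * b i)\<^sup>2 \<le> (\<Sum>i\<in>I. l i * (b i)\<^sup>2 / A i) * (\<Sum>i\<in>I. l i * A i)"
proof -
  have "0 \<le> (\<Sum>i\<in>I. \<Sum>j\<in>I. l i * l j * A i * A j * (b i / A i - b j / A j)\<^sup>2)"
    using assms by (intro sum_nonneg) (simp add: less_imp_le)
  then show ?thesis
    using assms by (simp add: sum_weighted_lagrange_identity less_imp_neq[symmetric])
qed

lemma weighted_cauchy_schwarz_eq_iff:
  fixes l A b :: "'a \<Rightarrow> real"
  assumes "finite I" "\<And>i. i \<in> I \<Longrightarrow> 0 \<le> l i" "\<And>i. i \<in> I \<Longrightarrow> 0 < A i"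
  shows "(\<Sum>i\<in>I. l i * b i)\<^sup>2 = (\<Sum>i\<in>I. l i * (b i)\<^sup>2 / A i) * (\<Sum>i\<in>I. l i * A i)
     \<longleftrightarrow> (\<forall>i\<in>I. \<forall>j\<in>I. 0 < l i \<longrightarrow> 0 < l j \<longrightarrow> b i / A i = b j / A j)"
proof -
  have term_nonneg: "0 \<le> l i * l j * A i * A j * (b i / A i - b j / A j)\<^sup>2"
    if "i \<in> I" "j \<in> I" for i j
    using assms that by (simp add: less_imp_le)
  have "(\<Sum>i\<in>I. \<Sum>j\<in>I. l i * l j * A i * A j * (b i / A i - b j / A j)\<^sup>2)
      = 2 * ((\<Sum>i\<in>I. l i * (b i)\<^sup>2 / A i) * (\<Sum>i\<in>I. l i * A i) - (\<Sum>i\<in>I. l i * b i)\<^sup>2)"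
    using assms(3) by (intro sum_weighted_lagrange_identity) (simp add: less_imp_neq[symmetric])
  then have "(\<Sum>i\<in>I. l i * b i)\<^sup>2 = (\<Sum>i\<in>I. l i * (b i)\<^sup>2 / A i) * (\<Sum>i\<in>I. l i * A i)
      \<longleftrightarrow> (\<Sum>i\<in>I. \<Sum>j\<in>I. l i * l j * A i * A j * (b i / A i - b j / A j)\<^sup>2) = 0"
    by auto
  also have "\<dots> \<longleftrightarrow> (\<forall>i\<in>I. \<forall>j\<in>I. l i * l j * A i * A j * (b i / A i - b j / A j)\<^sup>2 = 0)"
    using assms(1) term_nonneg by (simp add: sum_nonneg_eq_0_iff sum_nonneg)
  also have "\<dots> \<longleftrightarrow> (\<forall>i\<in>I. \<forall>j\<in>I. 0 < l i \<longrightarrow> 0 < l j \<longrightarrow> b i / A i = b j / A j)"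
  proof -
    have "l i * l j * A i * A j * (b i / A i - b j / A j)\<^sup>2 = 0
        \<longleftrightarrow> (0 < l i \<longrightarrow> 0 < l j \<longrightarrow> b i / A i = b j / A j)" if "i \<in> I" "j \<in> I" for i j
      using assms(2,3)[OF that(1)] assms(2,3)[OF that(2)] by (auto simp: less_le)
    then show ?thesis by blast
  qed
  finally show ?thesis .
qed

lemma sum_eq_1_singleton_support_iff:
  fixes l :: "'a \<Rightarrow> real"
  assumes "finite I" "\<And>i. i \<in> I \<Longrightarrow> 0 \<le> l i" "sum l I = 1"
  shows "(\<forall>i\<in>I. \<forall>j\<in>I. 0 < l i \<longrightarrow> 0 < l j \<longrightarrow> i = j) \<longleftrightarrow> (\<exists>i\<in>I. l i = 1)"
proof
  assume unique: "\<forall>i\<in>I. \<forall>j\<in>I. 0 < l i \<longrightarrow> 0 < l j \<longrightarrow> i = j"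
  obtain i where i: "i \<in> I" "0 < l i"
    using assms sum_nonneg_eq_0_iff[of I l] by (metis less_le zero_neq_one)
  have "sum l I = l i + sum l (I - {i})"
    using assms(1) i(1) by (rule sum.remove)
  also have "sum l (I - {i}) = 0"
    using unique i assms(2) by (intro sum.neutral) (metis DiffE insertI1 less_le)
  finally show "\<exists>i\<in>I. l i = 1" using assms(3) i(1) by auto
next
  assume "\<exists>i\<in>I. l i = 1"
  then obtain i where i: "i \<in> I" "l i = 1" by blast
  have "sum l (I - {i}) = 0"
    using assms(3) sum.remove[OF assms(1) i(1), of l] i(2) by simp
  then have "\<forall>j\<in>I - {i}. l j = 0"
    using assms by (subst (asm) sum_nonneg_eq_0_iff) auto
  then show "\<forall>j\<in>I. \<forall>k\<in>I. 0 < l j \<longrightarrow> 0 < l k \<longrightarrow> j = k"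
    by (metis DiffI less_irrefl singletonD)
qed

lemma weighted_sum_pos:
  fixes l f :: "'a \<Rightarrow> real"
  assumes "finite I" "\<And>i. i \<in> I \<Longrightarrow> 0 \<le> l i" "sum l I = 1" "\<And>i. i \<in> I \<Longrightarrow> 0 < f i"
  shows "0 < (\<Sum>i\<in>I. l i * f i)"
proof -
  obtain i where i: "i \<in> I" "0 < l i"
    using assms sum_nonneg_eq_0_iff[of I l] by (metis less_le zero_neq_one)
  show ?thesis
    using assms i by (intro sum_pos2[of I i]) (auto intro: mult_nonneg_nonneg less_imp_le)
qed

lemma inverse_weighted_sum_le:
  fixes l A b :: "'a \<Rightarrow> real"
  assumes "finite I" "\<And>i. i \<in> I \<Longrightarrow> 0 \<le> l i" "sum l I = 1"
    and "\<And>i. i \<in> I \<Longrightarrow> 0 < A i" "\<And>i. i \<in> I \<Longrightarrow> 0 < b i"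
  shows "inverse (\<Sum>i\<in>I. l i * (b i)\<^sup>2 / A i) \<le> (\<Sum>i\<in>I. l i * A i) / (\<Sum>i\<in>I. l i * b i)\<^sup>2"
proof -
  have "0 < (b i)\<^sup>2 / A i" if "i \<in> I" for i
    using assms(4,5)[OF that] by simp
  from weighted_sum_pos[OF assms(1-3) this] weighted_sum_pos[OF assms(1-3,5)]
  have "0 < (\<Sum>i\<in>I. l i * (b i)\<^sup>2 / A i)" "0 < (\<Sum>i\<in>I. l i * b i)"
    by simp_all
  then show ?thesis
    using weighted_cauchy_schwarz[of I l A b] assms by (simp add: field_simps)
qed

lemma inverse_weighted_sum_eq_iff:
  fixes l A b :: "'a \<Rightarrow> real"
  assumes "finite I" "\<And>i. i \<in> I \<Longrightarrow> 0 \<le> l i" "sum l I = 1"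
    and "\<And>i. i \<in> I \<Longrightarrow> 0 < A i" "\<And>i. i \<in> I \<Longrightarrow> 0 < b i"
    and "inj_on (\<lambda>i. b i / A i) I"
  shows "inverse (\<Sum>i\<in>I. l i * (b i)\<^sup>2 / A i) = (\<Sum>i\<in>I. l i * A i) / (\<Sum>i\<in>I. l i * b i)\<^sup>2
     \<longleftrightarrow> (\<exists>i\<in>I. l i = 1)"
proof -
  have "0 < (b i)\<^sup>2 / A i" if "i \<in> I" for i
    using assms(4,5)[OF that] by simp
  from weighted_sum_pos[OF assms(1-3) this] weighted_sum_pos[OF assms(1-3,5)]
  have "0 < (\<Sum>i\<in>I. l i * (b i)\<^sup>2 / A i)" "0 < (\<Sum>i\<in>I. l i * b i)"
    by simp_all
  then have "inverse (\<Sum>i\<in>I. l i * (b i)\<^sup>2 / A i) = (\<Sum>i\<in>I. l i * A i) / (\<Sum>i\<in>I. l i * b i)\<^sup>2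
      \<longleftrightarrow> (\<Sum>i\<in>I. l i * b i)\<^sup>2 = (\<Sum>i\<in>I. l i * (b i)\<^sup>2 / A i) * (\<Sum>i\<in>I. l i * A i)"
    by (simp add: field_simps)
  also have "\<dots> \<longleftrightarrow> (\<forall>i\<in>I. \<forall>j\<in>I. 0 < l i \<longrightarrow> 0 < l j \<longrightarrow> b i / A i = b j / A j)"
    using assms by (intro weighted_cauchy_schwarz_eq_iff) auto
  also have "\<dots> \<longleftrightarrow> (\<forall>i\<in>I. \<forall>j\<in>I. 0 < l i \<longrightarrow> 0 < l j \<longrightarrow> i = j)"
    using assms(6) by (auto dest: inj_onD)
  also have "\<dots> \<longleftrightarrow> (\<exists>i\<in>I. l i = 1)"
    using assms by (intro sum_eq_1_singleton_support_iff) auto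
  finally show ?thesis .
qed

theorem theorem4:
  fixes m :: nat and M :: "real measure" and t :: real and lam :: "nat \<Rightarrow> real"
  assumes "m \<ge> 1"
    and "real_distribution M"
    and "0 < cdf M t" and "cdf M t < 1"
    and "\<And>r. r \<in> {1..m} \<Longrightarrow> lam r \<ge> 0"
    and "(\<Sum>r=1..m. lam r) = 1"
  shows "sigma_ml2 m lam (cdf M t) \<le> sigma_mb2 m lam (cdf M t)
    \<and> (sigma_ml2 m lam (cdf M t) = sigma_mb2 m lam (cdf M t)
         \<longleftrightarrow> m = 1 \<or> (\<exists>r\<in>{1..m}. lam r = 1))"
proof -
  \<comment> \<open>Only \<open>y = F(t) \<in> (0, 1)\<close> matters.\<close>
  define y where "y = cdf M t"
  have y: "0 < y" "y < 1" using assms(3,4) by (simp_all add: y_def)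
  define A where "A r = Bstrat m r y * (1 - Bstrat m r y)" for r
  have A: "0 < A r" if "r \<in> {1..m}" for r
    using Bstrat_strict_bounds[OF y, of r m] that by (simp add: A_def)
  have b: "0 < bstrat m r y" if "r \<in> {1..m}" for r
    using bstrat_pos[OF y, of r m] that by simp
  have inj: "inj_on (\<lambda>r. bstrat m r y / A r) {1..m}"
    using inj_on_strat_ratio[OF y, of m] by (simp add: A_def strat_ratio_def)
  have ml: "sigma_ml2 m lam y = inverse (\<Sum>r\<in>{1..m}. lam r * (bstrat m r y)\<^sup>2 / A r)"
    by (simp add: sigma_ml2_def A_def)
  have mb: "sigma_mb2 m lam y = (\<Sum>r\<in>{1..m}. lam r * A r) / (\<Sum>r\<in>{1..m}. lam r * bstrat m r y)\<^sup>2"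
    by (simp add: sigma_mb2_def A_def mult.assoc)
  have "m = 1 \<or> (\<exists>r\<in>{1..m}. lam r = 1) \<longleftrightarrow> (\<exists>r\<in>{1..m}. lam r = 1)"
    using assms(6) by auto
  then show ?thesis
    unfolding y_def[symmetric] ml mb
    using inverse_weighted_sum_le[of "{1..m}" lam A "\<lambda>r. bstrat m r y"]
      inverse_weighted_sum_eq_iff[of "{1..m}" lam A "\<lambda>r. bstrat m r y"]
      assms(5,6) A b inj
    by simp
qed

end
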